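(* Let $k\geq 3$, $t,q\geq k-1$, $\chi>\binom{q}{k-1}$ and $n\geq 3(k-1)$ be integers with $n\equiv 0\pmod{k-1}$. Let $H$ be the $k$-graph on vertex set $A_1\sqcup\dots\sqcup A_\chi$, where $|A_i|>(\chi-1)(k-2)+\max\{\tau(k-1,t),q\}$ for all $i\in[\chi-1]$ and $|A_\chi|=t$, whose edges are all $k$-subsets $e$ of the vertex set such that $|e\cap A_i|=k-1$ for some $i\in[\chi]$. Then $R(C^{(k)}_{n,1},H)>(\chi-1)(n-1)+\max\{\tau(k-1,t),q\}$.
   Context: A $k$-graph is a $k$-uniform hypergraph. $R(G,H)$ is the least $N$ such that every red/blue colouring of the edges of $K^{(k)}_N$ contains a red copy of $G$ or a blue copy of $H$. For $n=q'(k-1)$, the loose cycle $C^{(k)}_{n,1}$ has vertices $v_1,\dots,v_n$ and edges $\{v_{(i-1)(k-1)+1},\dots,v_{i(k-1)+1}\}$ for $i\in[q']$, with $v_{n+1}=v_1$. For integers $j,\alpha\ge1$, $\tau(j,\alpha)$ is the largest $N$ such that some $j$-uniform hypergraph on $N$ vertices has independence number less than $\alpha$ and no two edges meeting in exactly one vertex. *)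

theory Defs
  imports Main
begin

text \<open>The complete k-graph on N vertices is taken on vertex set {..<N}; a red/blue
  colouring of its edges is a function c :: nat set \<Rightarrow> bool (True = red, False = blue),
  of which only the values on k-subsets of {..<N} matter.\<close>

definition copy_in :: "nat \<Rightarrow> nat \<Rightarrow> (nat set \<Rightarrow> bool) \<Rightarrow> bool \<Rightarrow> 'a set \<times> 'a set set \<Rightarrow> bool" where
  "copy_in k N c col G \<longleftrightarrow>
     (\<exists>f. inj_on f (fst G) \<and> f ` fst G \<subseteq> {..<N} \<and>
          (\<forall>e\<in>snd G. card (f ` e) = k \<and> c (f ` e) = col))"

definition ramsey_arrows :: "nat \<Rightarrow> nat \<Rightarrow> 'a set \<times> 'a set set \<Rightarrow> 'b set \<times> 'b set set \<Rightarrow> bool" where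
  "ramsey_arrows k N G H \<longleftrightarrow> (\<forall>c. copy_in k N c True G \<or> copy_in k N c False H)"

definition ramsey_number :: "nat \<Rightarrow> 'a set \<times> 'a set set \<Rightarrow> 'b set \<times> 'b set set \<Rightarrow> nat" where
  "ramsey_number k G H = (LEAST N. ramsey_arrows k N G H)"

definition loose_cycle :: "nat \<Rightarrow> nat \<Rightarrow> nat set \<times> nat set set" where
  "loose_cycle k n =
    ({1..n},
     {(\<lambda>j. if j = n + 1 then 1 else j) ` {(i - 1) * (k - 1) + 1 .. i * (k - 1) + 1}
        | i. i \<in> {1 .. n div (k - 1)}})"

definition independent_set :: "'a set set \<Rightarrow> 'a set \<Rightarrow> bool" where
  "independent_set E I \<longleftrightarrow> (\<forall>e\<in>E. \<not> e \<subseteq> I)"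

definition independence_number :: "'a set \<Rightarrow> 'a set set \<Rightarrow> nat" where
  "independence_number V E = Max {card I | I. I \<subseteq> V \<and> independent_set E I}"

definition tau :: "nat \<Rightarrow> nat \<Rightarrow> nat" where
  "tau j \<alpha> = (GREATEST N. \<exists>E. E \<subseteq> {e. e \<subseteq> {..<N} \<and> card e = j} \<and>
        independence_number {..<N} E < \<alpha> \<and>
        (\<forall>e\<in>E. \<forall>e'\<in>E. e \<noteq> e' \<longrightarrow> card (e \<inter> e') \<noteq> 1))"

end

theory Submission
  imports Defs "HOL-Library.Ramsey" "HOL-Library.Disjoint_Sets" "HOL.Binomial_Plus"
begin

(* Colour the k-sets of N = m + (\<chi>-1)(n-1) vertices, split into W = {..<m} and \<chi>-1 blocks
   of n-1 vertices, red inside each block. Consecutive edges of a loose cycle share a vertex,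
   so a red loose cycle inside the blocks lies in one block, which is too small. The other red
   edges are v + T with v outside W and T a (k-1)-subset of W:
   - m = tau(k-1,t): the sets T form a family with independence number < t in which no two
     members meet in exactly one vertex; two cycle edges through a vertex of W would do so.
   - m = q < n - L, where L = n/(k-1) is the number of cycle edges: every (k-1)-subset of W
     is attached to a block. A cycle cannot enter such an edge through v, so once it uses
     one it uses only such edges and has at most q + L vertices.
   - m = q >= n - L: no further red edges; H has more than N vertices.
   In a blue copy of H every part A i, i < \<chi>, maps k-1 vertices into some block, and then
   no other part meets that block. So the blocks have distinct owners, A \<chi> lands in W, and
   a (k-1)-subset of its image plus a vertex of a suitable owner spans a red edge of H. *)

lemma mod_add_neq:
  fixes L :: nat
  assumes "0 < d" "d < L"
  shows "(i + d) mod L \<noteq> i mod L"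
proof
  assume "(i + d) mod L = i mod L"
  then have "L dvd d"
    using mod_eq_dvd_iff_nat[of i "i + d" L] by simp
  then show False
    using assms by (simp add: nat_dvd_not_less)
qed

lemma atLeastLessThan_mult_iff:
  fixes K :: nat
  assumes "0 < K"
  shows "z \<in> {a * K ..< Suc a * K} \<longleftrightarrow> z div K = a"
  using assms by (auto intro: div_nat_eqI simp: mult.commute dividend_less_times_div)

definition uniform_hypergraph :: "nat \<Rightarrow> 'a set \<times> 'a set set \<Rightarrow> bool" where
  "uniform_hypergraph k G \<longleftrightarrow> finite (fst G) \<and> (\<forall>e\<in>snd G. e \<subseteq> fst G \<and> card e = k)"

lemma copy_in_mono:
  assumes "copy_in k N c col G" "N \<le> M"
  shows "copy_in k M c col G"
proof -
  have "{..<N} \<subseteq> {..<M}" using assms(2) by auto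
  then show ?thesis using assms(1) unfolding copy_in_def by (meson order_trans)
qed

lemma ramsey_arrows_mono:
  assumes "ramsey_arrows k N G H" "N \<le> M"
  shows "ramsey_arrows k M G H"
  using assms unfolding ramsey_arrows_def by (metis copy_in_mono)

lemma copy_in_of_monochromatic:
  assumes G: "uniform_hypergraph k G"
    and Y: "Y \<subseteq> {..<N}" "finite Y" "card Y = card (fst G)"
    and mono: "\<And>e. e \<subseteq> Y \<Longrightarrow> card e = k \<Longrightarrow> c e = col"
  shows "copy_in k N c col G"
proof -
  obtain h where h: "bij_betw h (fst G) Y"
    using G Y by (metis finite_same_card_bij uniform_hypergraph_def)
  have "card (h ` e) = k \<and> c (h ` e) = col" if "e \<in> snd G" for e
  proof -
    have e: "e \<subseteq> fst G" "card e = k" using G that by (auto simp: uniform_hypergraph_def)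
    then have "card (h ` e) = k" using h by (metis bij_betw_def card_image inj_on_subset)
    moreover have "h ` e \<subseteq> Y" using h e(1) by (auto simp: bij_betw_def)
    ultimately show ?thesis using mono by blast
  qed
  then show ?thesis using h Y(1) unfolding copy_in_def bij_betw_def by blast
qed

lemma ramsey_arrows_exists:
  assumes G: "uniform_hypergraph k G" and H: "uniform_hypergraph k H"
  shows "\<exists>N. ramsey_arrows k N G H"
proof -
  obtain N :: nat where N: "partn_lst {..<N} [card (fst G), card (fst H)] k"
    using ramsey_full by blast
  have "copy_in k N c True G \<or> copy_in k N c False H" for c
  proof -
    define colour where "colour e = (if c e then 0 else 1 :: nat)" for e
    have "colour \<in> nsets {..<N} k \<rightarrow> {..<2}" by (simp add: colour_def)
    then obtain i Y where i: "i < 2" and Y: "Y \<in> nsets {..<N} ([card (fst G), card (fst H)] ! i)"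
      and mono: "colour ` nsets Y k \<subseteq> {i}"
      using partn_lstE[OF N] by (metis length_Cons list.size(3) numeral_2_eq_2)
    have Y_fin: "Y \<subseteq> {..<N}" "finite Y" using Y by (auto simp: nsets_def)
    have colour_Y: "colour e = i" if "e \<subseteq> Y" "card e = k" for e
      using mono that Y_fin(2) by (auto simp: nsets_def intro: finite_subset)
    show ?thesis
    proof (cases "i = 0")
      case True
      have "c e = True" if "e \<subseteq> Y" "card e = k" for e
        using colour_Y[OF that] True unfolding colour_def by (cases "c e") simp_all
      moreover have "card Y = card (fst G)" using Y True by (simp add: nsets_def)
      ultimately have "copy_in k N c True G"
        using copy_in_of_monochromatic[OF G Y_fin] by blast
      then show ?thesis ..
    next
      case False
      then have i1: "i = 1" using i by simp
      have "c e = False" if "e \<subseteq> Y" "card e = k" for e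
        using colour_Y[OF that] i1 unfolding colour_def by (cases "c e") simp_all
      moreover have "card Y = card (fst H)" using Y i1 by (simp add: nsets_def)
      ultimately have "copy_in k N c False H"
        using copy_in_of_monochromatic[OF H Y_fin] by blast
      then show ?thesis ..
    qed
  qed
  then have "ramsey_arrows k N G H" unfolding ramsey_arrows_def by simp
  then show ?thesis ..
qed

lemma less_ramsey_number:
  assumes "uniform_hypergraph k G" "uniform_hypergraph k H" "\<not> ramsey_arrows k N G H"
  shows "N < ramsey_number k G H"
proof (rule ccontr)
  assume "\<not> N < ramsey_number k G H"
  moreover have "ramsey_arrows k (ramsey_number k G H) G H"
    unfolding ramsey_number_def using ramsey_arrows_exists[OF assms(1,2)] by (rule LeastI_ex)
  ultimately show False using assms(3) ramsey_arrows_mono by (meson not_less)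
qed

lemma card_le_of_copy_in:
  assumes "copy_in k N c col G"
  shows "card (fst G) \<le> N"
proof -
  obtain f where "inj_on f (fst G)" "f ` fst G \<subseteq> {..<N}"
    using assms unfolding copy_in_def by blast
  then have "card (fst G) \<le> card {..<N}" by (intro card_inj_on_le) auto
  then show ?thesis by simp
qed

lemma obtain_onto_lessThan:
  assumes "finite B" "B \<noteq> {}" "card B \<le> C"
  obtains \<sigma> :: "nat \<Rightarrow> 'a" where "\<And>j. \<sigma> j \<in> B" "B \<subseteq> \<sigma> ` {..<C}"
proof -
  obtain h where h: "bij_betw h {0..<card B} B" using ex_bij_betw_nat_finite[OF assms(1)] by blast
  define \<sigma> where "\<sigma> j = h (min j (card B - 1))" for j
  have pos: "0 < card B" using assms(1,2) by (simp add: card_gt_0_iff)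
  have "\<sigma> j \<in> B" for j
    unfolding \<sigma>_def using bij_betwE[OF h] pos by simp
  moreover have "B \<subseteq> \<sigma> ` {..<C}"
  proof
    fix T assume "T \<in> B"
    then obtain a where a: "a \<in> {0..<card B}" "T = h a" using h unfolding bij_betw_def by blast
    have "min a (card B - 1) = a" using a(1) by (simp add: less_imp_le_nat less_Suc_eq_le)
    then have "\<sigma> a = T" using a(2) by (simp add: \<sigma>_def)
    moreover have "a < C" using a(1) assms(3) by simp
    ultimately show "T \<in> \<sigma> ` {..<C}" by blast
  qed
  ultimately show ?thesis using that by blast
qed

definition tau_admissible :: "nat \<Rightarrow> nat \<Rightarrow> nat \<Rightarrow> nat set set \<Rightarrow> bool" where
  "tau_admissible j \<alpha> N E \<longleftrightarrow> E \<subseteq> {e. e \<subseteq> {..<N} \<and> card e = j} \<and>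
     independence_number {..<N} E < \<alpha> \<and> (\<forall>e\<in>E. \<forall>e'\<in>E. e \<noteq> e' \<longrightarrow> card (e \<inter> e') \<noteq> 1)"

lemma finite_independent_set_cards:
  assumes "finite V"
  shows "finite {card I | I. I \<subseteq> V \<and> independent_set E I}"
proof -
  have "{card I | I. I \<subseteq> V \<and> independent_set E I} \<subseteq> card ` Pow V" by auto
  then show ?thesis using assms by (meson finite_Pow_iff finite_imageI finite_subset)
qed

lemma card_le_independence_number:
  assumes "finite V" "I \<subseteq> V" "independent_set E I"
  shows "card I \<le> independence_number V E"
  unfolding independence_number_def
  using finite_independent_set_cards[OF assms(1)] assms(2,3) by (auto intro: Max_ge)

lemma edge_subset_if_independence_number_less:
  assumes "finite V" "X \<subseteq> V" "independence_number V E < card X"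
  shows "\<exists>e\<in>E. e \<subseteq> X"
  using card_le_independence_number[OF assms(1,2), of E] assms(3)
  unfolding independent_set_def by fastforce

lemma independence_number_restrict_le:
  assumes V': "finite V'" and "V \<subseteq> V'" and "{} \<notin> E"
  shows "independence_number V {e\<in>E. e \<subseteq> V} \<le> independence_number V' E"
proof -
  have "independent_set {e\<in>E. e \<subseteq> V} {}" using assms(3) by (auto simp: independent_set_def)
  then have ne: "{card I | I. I \<subseteq> V \<and> independent_set {e\<in>E. e \<subseteq> V} I} \<noteq> {}" by blast
  have "card I \<le> independence_number V' E"
    if "I \<subseteq> V" "independent_set {e\<in>E. e \<subseteq> V} I" for I
  proof -
    have "independent_set E I" using that unfolding independent_set_def by blast
    then show ?thesis using that(1) assms(2) by (intro card_le_independence_number[OF V']) auto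
  qed
  moreover have "finite V" using V' assms(2) by (rule finite_subset[rotated])
  ultimately show ?thesis unfolding independence_number_def[of V]
    using ne finite_independent_set_cards by (auto intro: Max.boundedI)
qed

lemma tau_admissible_restrict:
  assumes "tau_admissible j \<alpha> N' E" "N \<le> N'" "1 \<le> j"
  shows "tau_admissible j \<alpha> N {e\<in>E. e \<subseteq> {..<N}}"
proof -
  have "{} \<notin> E" using assms(1,3) by (auto simp: tau_admissible_def)
  then have "independence_number {..<N} {e\<in>E. e \<subseteq> {..<N}} \<le> independence_number {..<N'} E"
    using assms(2) by (intro independence_number_restrict_le) auto
  then show ?thesis using assms(1) unfolding tau_admissible_def by auto
qed

(* If admissible sizes are unbounded, GREATEST is unspecified; admissibility is closed
   downwards, so it still holds at tau j \<alpha>. *)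
lemma tau_admissible_tau:
  assumes "1 \<le> j" "1 \<le> \<alpha>"
  shows "\<exists>E. tau_admissible j \<alpha> (tau j \<alpha>) E"
proof -
  let ?P = "\<lambda>N. \<exists>E. tau_admissible j \<alpha> N E"
  have tau_eq: "tau j \<alpha> = (GREATEST N. ?P N)" by (simp add: tau_def tau_admissible_def)
  have "independence_number {..<0::nat} {} = 0"
    by (simp add: independence_number_def independent_set_def)
  then have P0: "?P 0" using assms(2) by (auto simp: tau_admissible_def)
  show ?thesis
  proof (cases "\<exists>B. \<forall>N. ?P N \<longrightarrow> N \<le> B")
    case True
    then obtain B where "\<And>N. ?P N \<Longrightarrow> N \<le> B" by blast
    then show ?thesis unfolding tau_eq by (rule GreatestI_nat[where P = ?P, OF P0])
  next
    case False
    then obtain N where "?P N" "tau j \<alpha> \<le> N" by (meson nle_le)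
    then show ?thesis using tau_admissible_restrict assms(1) by blast
  qed
qed

(* The shape of a loose cycle with L edges, indexed modulo L; x i is where E i meets E (Suc i). *)
locale cycle_chain =
  fixes L :: nat and E :: "nat \<Rightarrow> 'a set" and x :: "nat \<Rightarrow> 'a"
  assumes two_le_L: "2 \<le> L"
    and E_mod: "E (i mod L) = E i"
    and finite_E: "finite (E i)"
    and x_in_E: "x i \<in> E i"
    and x_in_E_Suc: "x i \<in> E (Suc i)"
    and x_neq: "i mod L \<noteq> j mod L \<Longrightarrow> x i \<noteq> x j"
    and card_Int_E_le_1: "i mod L \<noteq> j mod L \<Longrightarrow> card (E i \<inter> E j) \<le> 1"
begin

lemma E_add_L: "E (i + L) = E i"
  by (metis E_mod mod_add_self2)

lemma UN_E_lessThan: "(\<Union>i<L. E i) = (\<Union>i. E i)"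
proof
  show "(\<Union>i. E i) \<subseteq> (\<Union>i<L. E i)"
  proof
    fix y assume "y \<in> (\<Union>i. E i)"
    then obtain i where "y \<in> E (i mod L)" using E_mod by auto
    moreover have "i mod L < L" using two_le_L by simp
    ultimately show "y \<in> (\<Union>i<L. E i)" by blast
  qed
qed auto

lemma other_edge_through:
  "\<exists>w i'. w \<in> E i \<and> w \<noteq> v \<and> w \<in> E i' \<and> i' mod L \<noteq> i mod L"
proof -
  define p where "p = i + (L - 1)"
  have p_neq: "p mod L \<noteq> i mod L" and Suc_neq: "Suc i mod L \<noteq> i mod L"
    using mod_add_neq[of "L - 1" L i] mod_add_neq[of 1 L i] two_le_L by (simp_all add: p_def)
  have "x p \<in> E i"
    using x_in_E_Suc[of p] E_add_L[of i] two_le_L by (simp add: p_def)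
  moreover have "x i \<noteq> x p" using x_neq p_neq by metis
  ultimately show ?thesis
    using x_in_E[of i] x_in_E_Suc[of i] x_in_E[of p] p_neq Suc_neq by metis
qed

lemma in_one_part:
  assumes parts: "\<And>i. \<exists>j. E i \<subseteq> P j" and disj: "disjoint_family P" and "E 0 \<subseteq> P j"
  shows "E i \<subseteq> P j"
proof (induction i)
  case (Suc i)
  obtain j' where j': "E (Suc i) \<subseteq> P j'" using parts by blast
  then have "x i \<in> P j \<inter> P j'" using Suc.IH x_in_E x_in_E_Suc by blast
  then have "j' = j" using disjoint_family_onD[OF disj] by blast
  then show ?case using j' by simp
qed (rule assms(3))

lemma not_in_small_parts:
  assumes parts: "\<And>i. \<exists>j. E i \<subseteq> P j" and disj: "disjoint_family P"
    and small: "\<And>j. finite (P j) \<and> card (P j) < card (\<Union>i. E i)"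
  shows False
proof -
  obtain j where "E 0 \<subseteq> P j" using parts by blast
  then have "(\<Union>i. E i) \<subseteq> P j" using in_one_part[OF parts disj] by blast
  then show False using small[of j] by (meson card_mono not_le)
qed

(* A vertex of T shared with a neighbouring edge v' + T' would make T and T' meet in exactly
   one vertex. *)
lemma in_parts_if_linear:
  assumes red: "\<And>i. (\<exists>j. E i \<subseteq> P j) \<or> (\<exists>T\<in>F. \<exists>v. v \<notin> W \<and> E i = insert v T)"
    and P_W: "\<And>j. P j \<inter> W = {}"
    and F: "\<And>T. T \<in> F \<Longrightarrow> T \<subseteq> W \<and> 2 \<le> card T"
    and linear: "\<And>T T'. T \<in> F \<Longrightarrow> T' \<in> F \<Longrightarrow> T \<noteq> T' \<Longrightarrow> card (T \<inter> T') \<noteq> 1"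
  shows "\<exists>j. E i \<subseteq> P j"
proof (rule ccontr)
  assume "\<nexists>j. E i \<subseteq> P j"
  then obtain T v where T: "T \<in> F" "v \<notin> W" "E i = insert v T" using red by blast
  obtain w i' where w: "w \<in> E i" "w \<noteq> v" "w \<in> E i'" "i' mod L \<noteq> i mod L"
    using other_edge_through by blast
  have "w \<in> W" using w T F by blast
  then have "\<nexists>j. E i' \<subseteq> P j" using w(3) P_W by blast
  then obtain T' v' where T': "T' \<in> F" "v' \<notin> W" "E i' = insert v' T'" using red by blast
  have "card (T \<inter> T') \<le> card (E i \<inter> E i')"
    using T(3) T'(3) finite_E[of i] by (intro card_mono) auto
  also have "\<dots> \<le> 1" using card_Int_E_le_1 w(4) by metis
  finally have Int_le_1: "card (T \<inter> T') \<le> 1" .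
  show False
  proof (cases "T = T'")
    case True
    then show False using Int_le_1 F[OF T(1)] by simp
  next
    case False
    have "finite T" using F[OF T(1)] by (intro card_ge_0_finite) simp
    moreover have "w \<in> T \<inter> T'" using w T T' \<open>w \<in> W\<close> by auto
    ultimately have "0 < card (T \<inter> T')" by (metis card_gt_0_iff empty_iff finite_Int)
    then have "card (T \<inter> T') = 1" using Int_le_1 by simp
    then show False using linear T(1) T'(1) False by blast
  qed
qed

context
  fixes P \<sigma> :: "nat \<Rightarrow> 'a set" and W :: "'a set"
  assumes red: "\<And>i. (\<exists>j. E i \<subseteq> P j) \<or> (\<exists>j. \<exists>v\<in>P j. E i = insert v (\<sigma> j))"
    and disjoint_P: "disjoint_family P"
    and P_W: "\<And>j. P j \<inter> W = {}"
    and \<sigma>_W: "\<And>j. \<sigma> j \<subseteq> W"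
    and two_le_card_\<sigma>: "\<And>j. 2 \<le> card (\<sigma> j)"
begin

lemma edge_through_part:
  assumes "y \<in> E i" "y \<in> P j"
  shows "E i \<subseteq> P j \<or> E i = insert y (\<sigma> j)"
  using red[of i]
proof
  assume "\<exists>j'. E i \<subseteq> P j'"
  then obtain j' where "E i \<subseteq> P j'" by blast
  moreover have "j' = j"
    using calculation assms disjoint_family_onD[OF disjoint_P, of j' j] by blast
  ultimately show ?thesis by simp
next
  assume "\<exists>j'. \<exists>v\<in>P j'. E i = insert v (\<sigma> j')"
  then obtain j' v where v: "v \<in> P j'" "E i = insert v (\<sigma> j')" by blast
  have "y \<notin> \<sigma> j'" using assms(2) P_W \<sigma>_W by blast
  then have "y = v" using assms(1) v(2) by blast
  then have "j' = j" using v(1) assms(2) disjoint_family_onD[OF disjoint_P, of j' j] by blast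
  then show ?thesis using v \<open>y = v\<close> by simp
qed

(* Otherwise, walking on from E i, each edge enters P j outside W, so it lies in P j (having
   body \<sigma> j would meet E i twice). This includes the edge before E i, whose connector into
   E i is in \<sigma> j \<subseteq> W. *)
lemma apex_not_connector:
  assumes apex: "E i = insert v (\<sigma> j)" "v \<in> P j"
  shows "x i \<noteq> v"
proof
  assume xv: "x i = v"
  have \<sigma>_small: "\<not> \<sigma> j \<subseteq> E i \<inter> E i'" if "i' mod L \<noteq> i mod L" for i'
  proof
    assume "\<sigma> j \<subseteq> E i \<inter> E i'"
    then have "card (\<sigma> j) \<le> card (E i \<inter> E i')" using finite_E by (simp add: card_mono)
    then show False using card_Int_E_le_1[OF that[symmetric]] two_le_card_\<sigma>[of j] by simp
  qed
  have walk: "E (i + d) \<subseteq> P j" if "0 < d" "d < L" for d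
    using that
  proof (induction d)
    case (Suc d)
    have "x (i + d) \<in> P j"
      using xv apex Suc x_in_E[of "i + d"] by (cases "d = 0") auto
    then have "E (i + Suc d) \<subseteq> P j \<or> E (i + Suc d) = insert (x (i + d)) (\<sigma> j)"
      using edge_through_part x_in_E_Suc[of "i + d"] by simp
    then show ?case
      using \<sigma>_small[of "i + Suc d"] mod_add_neq[of "Suc d" L i] Suc.prems apex by blast
  qed simp
  define p where "p = i + (L - 1)"
  have "p mod L \<noteq> i mod L"
    using mod_add_neq[of "L - 1" L i] two_le_L by (simp add: p_def)
  then have "x p \<noteq> v" using xv x_neq by metis
  moreover have "x p \<in> E i"
    using x_in_E_Suc[of p] E_add_L[of i] two_le_L by (simp add: p_def)
  ultimately have "x p \<in> W" using apex \<sigma>_W by blast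
  moreover have "E p \<subseteq> P j" using walk[of "L - 1"] two_le_L by (simp add: p_def)
  then have "x p \<in> P j" using x_in_E[of p] by blast
  ultimately show False using P_W by blast
qed

lemma apex_edge_Suc:
  assumes "E i = insert v (\<sigma> j)" "v \<in> P j"
  shows "\<exists>j' v'. v' \<in> P j' \<and> E (Suc i) = insert v' (\<sigma> j')"
proof -
  have "x i \<in> W" using apex_not_connector[OF assms] x_in_E[of i] assms(1) \<sigma>_W by blast
  then have "\<nexists>j'. E (Suc i) \<subseteq> P j'" using x_in_E_Suc[of i] P_W by blast
  then show ?thesis using red by blast
qed

lemma in_parts_or_card_le:
  assumes "finite W"
  shows "card (\<Union>i. E i) \<le> card W + L \<or> (\<forall>i. \<exists>j. E i \<subseteq> P j)"
proof (rule disjCI)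
  assume "\<not> (\<forall>i. \<exists>j. E i \<subseteq> P j)"
  then obtain i0 where "\<nexists>j. E i0 \<subseteq> P j" by blast
  then have "\<exists>j v. v \<in> P j \<and> E i0 = insert v (\<sigma> j)" using red by blast
  then have from_i0: "\<exists>j v. v \<in> P j \<and> E (i0 + d) = insert v (\<sigma> j)" for d
    by (induction d) (auto dest: apex_edge_Suc)
  have "\<exists>v. E i \<subseteq> insert v W" for i
  proof -
    have "E i = E (i0 + (i + L * i0 - i0))"
      using E_mod[of i] E_mod[of "i + L * i0"] two_le_L by (simp add: le_add2 trans_le_add2)
    then show ?thesis using from_i0 \<sigma>_W by blast
  qed
  then obtain a where a: "\<And>i. E i \<subseteq> insert (a i) W" by metis
  have "(\<Union>i. E i) \<subseteq> W \<union> a ` {..<L}" using a UN_E_lessThan by blast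
  then have "card (\<Union>i. E i) \<le> card (W \<union> a ` {..<L})" using assms by (simp add: card_mono)
  also have "\<dots> \<le> card W + card (a ` {..<L})" by (rule card_Un_le)
  also have "\<dots> \<le> card W + L" using card_image_le[of "{..<L}" a] by simp
  finally show "card (\<Union>i. E i) \<le> card W + L" .
qed

end

end

(* Edge a of loose_cycle (Suc K) (L * K), shifted down by one: the vertices a * K, ...,
   (a + 1) * K, the last one taken modulo L * K. *)
definition cycle_segment :: "nat \<Rightarrow> nat \<Rightarrow> nat \<Rightarrow> nat set" where
  "cycle_segment K L a = insert (Suc a mod L * K) {a * K ..< Suc a * K}"

lemma mem_cycle_segment_iff:
  assumes "0 < K"
  shows "z \<in> cycle_segment K L a \<longleftrightarrow> z div K = a \<or> z = Suc a mod L * K"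
  using atLeastLessThan_mult_iff[OF assms] by (auto simp: cycle_segment_def)

lemma cycle_segment_Int_cases:
  assumes K: "0 < K" and ab: "a < L" "b < L" "a \<noteq> b"
    and z: "z \<in> cycle_segment K L a" "z \<in> cycle_segment K L b"
  shows "(b = Suc a mod L \<and> z = Suc a mod L * K) \<or> (a = Suc b mod L \<and> z = Suc b mod L * K)"
proof -
  have "Suc a mod L \<noteq> Suc b mod L"
    using ab by (auto simp: mod_Suc split: if_splits)
  then have "Suc a mod L * K \<noteq> Suc b mod L * K" using K by simp
  moreover have "Suc a mod L * K div K = Suc a mod L" "Suc b mod L * K div K = Suc b mod L"
    using K by simp_all
  moreover have "z div K = a \<or> z = Suc a mod L * K" "z div K = b \<or> z = Suc b mod L * K"
    using z by (simp_all add: mem_cycle_segment_iff[OF K])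
  ultimately show ?thesis using ab(3) by auto
qed

lemma card_cycle_segment_Int:
  assumes K: "0 < K" and L: "3 \<le> L" and ab: "a < L" "b < L" "a \<noteq> b"
  shows "card (cycle_segment K L a \<inter> cycle_segment K L b) \<le> 1"
proof -
  have not_both: "\<not> (b = Suc a mod L \<and> a = Suc b mod L)"
    using ab L by (auto simp: mod_Suc split: if_splits)
  have "z = z'" if "z \<in> cycle_segment K L a \<inter> cycle_segment K L b"
    "z' \<in> cycle_segment K L a \<inter> cycle_segment K L b" for z z'
  proof -
    have "(b = Suc a mod L \<and> z = Suc a mod L * K) \<or> (a = Suc b mod L \<and> z = Suc b mod L * K)"
      "(b = Suc a mod L \<and> z' = Suc a mod L * K) \<or> (a = Suc b mod L \<and> z' = Suc b mod L * K)"
      using cycle_segment_Int_cases[OF K ab] that by blast+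
    then show "z = z'" using not_both by blast
  qed
  moreover have "finite (cycle_segment K L a \<inter> cycle_segment K L b)"
    by (simp add: cycle_segment_def)
  ultimately show ?thesis by (simp add: card_le_Suc0_iff_eq)
qed

lemma card_cycle_segment:
  assumes "0 < K" "2 \<le> L" "a < L"
  shows "card (cycle_segment K L a) = Suc K"
proof -
  have "Suc a mod L \<noteq> a" using assms by (cases "Suc a = L") simp_all
  then have "Suc a mod L * K div K \<noteq> a" using assms(1) by simp
  then have "Suc a mod L * K \<notin> {a * K ..< Suc a * K}"
    unfolding atLeastLessThan_mult_iff[OF assms(1)] .
  then show ?thesis unfolding cycle_segment_def by simp
qed

lemma UN_cycle_segment:
  assumes "0 < K"
  shows "(\<Union>a<L. cycle_segment K L a) = {..< L * K}"
proof
  show "(\<Union>a<L. cycle_segment K L a) \<subseteq> {..< L * K}"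
  proof (intro UN_least)
    fix a assume "a \<in> {..<L}"
    then have "Suc a * K \<le> L * K" "Suc a mod L * K < L * K"
      using mult_le_mono1[of "Suc a" L K] assms by auto
    then show "cycle_segment K L a \<subseteq> {..< L * K}" unfolding cycle_segment_def by auto
  qed
  show "{..< L * K} \<subseteq> (\<Union>a<L. cycle_segment K L a)"
  proof
    fix z assume "z \<in> {..< L * K}"
    then have "z div K < L" by (simp add: less_mult_imp_div_less)
    moreover have "z \<in> {z div K * K ..< Suc (z div K) * K}"
      unfolding atLeastLessThan_mult_iff[OF assms] ..
    ultimately show "z \<in> (\<Union>a<L. cycle_segment K L a)" unfolding cycle_segment_def by blast
  qed
qed

lemma loose_cycle_edge_eq_segment:
  assumes K: "0 < K" and n: "n = L * K" and a: "a < L"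
  shows "(\<lambda>j. if j = n + 1 then 1 else j) ` {a * K + 1 .. Suc a * K + 1} = Suc ` cycle_segment K L a"
proof -
  let ?wrap = "\<lambda>j. if j = n + 1 then 1 else j"
  have le_n: "Suc a * K \<le> n" using mult_le_mono1[OF Suc_leI[OF a]] n by blast
  have "{a * K + 1 .. Suc a * K + 1} = insert (Suc a * K + 1) (Suc ` {a * K ..< Suc a * K})"
    by auto
  then have "?wrap ` {a * K + 1 .. Suc a * K + 1}
      = insert (?wrap (Suc a * K + 1)) (?wrap ` Suc ` {a * K ..< Suc a * K})"
    by (simp only: image_insert)
  also have "?wrap (Suc a * K + 1) = Suc (Suc a mod L * K)"
  proof (cases "Suc a = L")
    case False
    then have "Suc a < L" using a by simp
    then have "Suc a * K < n" using n K by (metis mult_less_mono1)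
    then show ?thesis using False a by simp
  qed (use n in simp)
  also have "?wrap ` Suc ` {a * K ..< Suc a * K} = id ` Suc ` {a * K ..< Suc a * K}"
    by (rule image_cong[OF refl]) (use le_n in auto)
  finally show ?thesis by (simp add: cycle_segment_def)
qed

lemma snd_loose_cycle:
  assumes "0 < K" "n = L * K"
  shows "snd (loose_cycle (Suc K) n) = (\<lambda>a. Suc ` cycle_segment K L a) ` {..<L}"
proof -
  let ?wrap = "\<lambda>j. if j = n + 1 then 1 else j"
  have "n div K = L" using assms by simp
  then have "snd (loose_cycle (Suc K) n)
      = (\<lambda>i. ?wrap ` {(i - 1) * K + 1 .. i * K + 1}) ` Suc ` {..<L}"
    by (simp only: loose_cycle_def snd_conv Setcompr_eq_image diff_Suc_1 image_Suc_lessThan)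
  also have "\<dots> = (\<lambda>a. ?wrap ` {a * K + 1 .. Suc a * K + 1}) ` {..<L}"
    by (simp only: image_image diff_Suc_1)
  also have "\<dots> = (\<lambda>a. Suc ` cycle_segment K L a) ` {..<L}"
    using loose_cycle_edge_eq_segment[OF assms] by simp
  finally show ?thesis .
qed

lemma finite_cycle_segment: "finite (cycle_segment K L a)"
  by (simp add: cycle_segment_def)

lemma connector_mem_cycle_segment:
  assumes "0 < K"
  shows "Suc a mod L * K \<in> cycle_segment K L a" "a mod L * K \<in> cycle_segment K L (a mod L)"
  using assms by (simp_all add: mem_cycle_segment_iff)

lemma cycle_chain_segments:
  assumes K: "0 < K" and L: "3 \<le> L" and f: "inj_on f {1 .. L * K}"
  shows "cycle_chain L (\<lambda>i. f ` Suc ` cycle_segment K L (i mod L)) (\<lambda>i. f (Suc (Suc i mod L * K)))"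
proof (rule cycle_chain.intro)
  let ?seg = "\<lambda>a. Suc ` cycle_segment K L a"
  have seg_sub: "?seg a \<subseteq> {1 .. L * K}" if "a < L" for a
  proof -
    have "cycle_segment K L a \<subseteq> {..< L * K}" using UN_cycle_segment[OF K, of L] that by blast
    then show ?thesis by auto
  qed
  show "2 \<le> L" using L by simp
  fix i j
  show "f ` ?seg (i mod L mod L) = f ` ?seg (i mod L)" by simp
  show "finite (f ` ?seg (i mod L))" by (simp add: finite_cycle_segment)
  show "f (Suc (Suc i mod L * K)) \<in> f ` ?seg (i mod L)"
    using connector_mem_cycle_segment(1)[OF K, of "i mod L" L] by (simp add: mod_Suc_eq)
  show "f (Suc (Suc i mod L * K)) \<in> f ` ?seg (Suc i mod L)"
    using connector_mem_cycle_segment(2)[OF K, of "Suc i" L] by simp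
  assume ij: "i mod L \<noteq> j mod L"
  have Suc_neq: "Suc i mod L \<noteq> Suc j mod L"
    using ij by (metis mod_Suc nat.distinct(1) old.nat.inject)
  have connector_mem: "Suc (Suc l mod L * K) \<in> {1 .. L * K}" for l
  proof -
    have "Suc l mod L < L" using L by simp
    then have "Suc l mod L * K < L * K" using K by (rule mult_less_mono1)
    then show ?thesis unfolding atLeastAtMost_iff by (intro conjI Suc_leI) simp_all
  qed
  show "f (Suc (Suc i mod L * K)) \<noteq> f (Suc (Suc j mod L * K))"
  proof
    assume "f (Suc (Suc i mod L * K)) = f (Suc (Suc j mod L * K))"
    then have "Suc i mod L * K = Suc j mod L * K"
      using inj_onD[OF f _ connector_mem[of i] connector_mem[of j]] by simp
    then show False using Suc_neq K by simp
  qed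
  have "f ` ?seg (i mod L) \<inter> f ` ?seg (j mod L)
      = f ` Suc ` (cycle_segment K L (i mod L) \<inter> cycle_segment K L (j mod L))"
    using inj_on_image_Int[OF f seg_sub seg_sub] L by (simp add: image_Int)
  also have "card \<dots> \<le> card (Suc ` (cycle_segment K L (i mod L) \<inter> cycle_segment K L (j mod L)))"
    by (intro card_image_le) (simp add: finite_cycle_segment)
  also have "\<dots> = card (cycle_segment K L (i mod L) \<inter> cycle_segment K L (j mod L))"
    by (simp add: card_image)
  also have "\<dots> \<le> 1" using card_cycle_segment_Int[OF K L _ _ ij] L by simp
  finally show "card (f ` ?seg (i mod L) \<inter> f ` ?seg (j mod L)) \<le> 1" .
qed

lemma fst_loose_cycle: "fst (loose_cycle k n) = {1..n}"
  by (simp add: loose_cycle_def)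

lemma red_loose_cycle_chain:
  assumes copy: "copy_in k N c True (loose_cycle k n)"
    and k: "2 \<le> k" and L: "3 \<le> L" and n: "n = L * (k - 1)"
  obtains E x where "cycle_chain L E x" "\<And>i. c (E i)" "card (\<Union>i. E i) = n"
proof -
  define K where "K = k - 1"
  have K: "0 < K" and k_eq: "k = Suc K" and n_eq: "n = L * K"
    using k n by (simp_all add: K_def)
  have edges: "snd (loose_cycle k n) = (\<lambda>a. Suc ` cycle_segment K L a) ` {..<L}"
    using snd_loose_cycle[OF K n_eq] k_eq by simp
  obtain f where f: "inj_on f {1..n}"
    and f_edges: "\<forall>e\<in>(\<lambda>a. Suc ` cycle_segment K L a) ` {..<L}. card (f ` e) = k \<and> c (f ` e) = True"
    using copy unfolding copy_in_def fst_loose_cycle edges by blast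
  have red: "c (f ` Suc ` cycle_segment K L a)" if "a < L" for a
    using f_edges that by blast
  define E where "E = (\<lambda>i. f ` Suc ` cycle_segment K L (i mod L))"
  define x where "x = (\<lambda>i. f (Suc (Suc i mod L * K)))"
  have chain: "cycle_chain L E x"
    unfolding E_def x_def using cycle_chain_segments[OF K L] f n_eq by simp
  moreover have "c (E i)" for i
    unfolding E_def using red L by simp
  moreover have "card (\<Union>i. E i) = n"
  proof -
    have "(\<Union>i. E i) = (\<Union>i<L. E i)" using cycle_chain.UN_E_lessThan[OF chain] by simp
    also have "\<dots> = f ` Suc ` (\<Union>a<L. cycle_segment K L a)" by (auto simp: E_def)
    also have "\<dots> = f ` {1..n}" by (simp add: UN_cycle_segment[OF K] n_eq image_Suc_lessThan)
    finally show ?thesis using f by (simp add: card_image)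
  qed
  ultimately show ?thesis using that by blast
qed

lemma uniform_loose_cycle:
  assumes "2 \<le> k" "2 \<le> L" "n = L * (k - 1)"
  shows "uniform_hypergraph k (loose_cycle k n)"
proof -
  define K where "K = k - 1"
  have K: "0 < K" and k_eq: "k = Suc K" and n_eq: "n = L * K"
    using assms by (simp_all add: K_def)
  have "Suc ` cycle_segment K L a \<subseteq> {1..n} \<and> card (Suc ` cycle_segment K L a) = k" if "a < L" for a
  proof
    have "cycle_segment K L a \<subseteq> {..<n}" using UN_cycle_segment[OF K, of L] that n_eq by blast
    then show "Suc ` cycle_segment K L a \<subseteq> {1..n}" by auto
    show "card (Suc ` cycle_segment K L a) = k"
      using card_cycle_segment[OF K assms(2) that] k_eq by (simp add: card_image)
  qed
  then show ?thesis
    unfolding uniform_hypergraph_def fst_loose_cycle snd_loose_cycle[OF K n_eq, folded k_eq] by auto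
qed

definition block :: "nat \<Rightarrow> nat \<Rightarrow> nat \<Rightarrow> nat set" where
  "block m s j = {m + j * s ..< m + Suc j * s}"

lemma mem_block_iff:
  assumes "0 < s"
  shows "z \<in> block m s j \<longleftrightarrow> m \<le> z \<and> (z - m) div s = j"
proof -
  have "z \<in> block m s j \<longleftrightarrow> m \<le> z \<and> z - m \<in> {j * s ..< Suc j * s}"
    unfolding block_def by auto
  then show ?thesis unfolding atLeastLessThan_mult_iff[OF assms] .
qed

lemma disjoint_family_block: "disjoint_family (block m s)"
proof (cases "s = 0")
  case True
  then show ?thesis by (simp add: block_def disjoint_family_on_def)
next
  case False
  then show ?thesis by (auto simp: disjoint_family_on_def mem_block_iff)
qed

lemma block_Int_lessThan: "block m s j \<inter> {..<m} = {}"
  by (auto simp: block_def)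

lemma card_block: "card (block m s j) = s"
  by (simp add: block_def)

lemma finite_block: "finite (block m s j)"
  by (simp add: block_def)

lemma lessThan_or_block:
  assumes "z < m + C * s"
  shows "z < m \<or> (\<exists>j<C. z \<in> block m s j)"
proof (cases "z < m")
  case False
  then have "0 < s" using assms by (cases s) auto
  moreover have "(z - m) div s < C"
    using assms False by (simp add: less_mult_imp_div_less)
  ultimately show ?thesis using False by (auto simp: mem_block_iff)
qed simp

lemma pigeonhole_block:
  assumes X: "finite X" and g: "inj_on g X" "g ` X \<subseteq> {..< m + C * s}"
    and big: "m + C * r < card X"
  shows "\<exists>j<C. \<exists>S\<subseteq>X. card S = Suc r \<and> g ` S \<subseteq> block m s j"
proof (rule ccontr)
  assume none: "\<not> ?thesis"
  define B where "B j = {y \<in> X. g y \<in> block m s j}" for j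
  have card_B: "card (B j) \<le> r" if "j < C" for j
  proof (rule ccontr)
    assume "\<not> card (B j) \<le> r"
    then obtain S where "S \<subseteq> B j" "card S = Suc r"
      by (meson not_le Suc_leI obtain_subset_with_card_n)
    then show False using none that by (auto simp: B_def)
  qed
  have "card {y \<in> X. g y < m} \<le> card {..<m}"
    using g(1) by (intro card_inj_on_le) (auto intro: inj_on_subset)
  then have low: "card {y \<in> X. g y < m} \<le> m" by simp
  have "card (\<Union>j<C. B j) \<le> (\<Sum>j<C. card (B j))" by (rule card_UN_le) simp
  also have "\<dots> \<le> C * r" using sum_bounded_above[of "{..<C}" "\<lambda>j. card (B j)" r] card_B by simp
  finally have high: "card (\<Union>j<C. B j) \<le> C * r" .
  have "X \<subseteq> {y \<in> X. g y < m} \<union> (\<Union>j<C. B j)"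
  proof
    fix y assume y: "y \<in> X"
    then have "g y < m + C * s" using g(2) by auto
    then show "y \<in> {y \<in> X. g y < m} \<union> (\<Union>j<C. B j)"
      using lessThan_or_block[of "g y"] y unfolding B_def by blast
  qed
  moreover have "finite ({y \<in> X. g y < m} \<union> (\<Union>j<C. B j))" by (simp add: B_def X)
  ultimately have "card X \<le> card ({y \<in> X. g y < m} \<union> (\<Union>j<C. B j))" by (rule card_mono[rotated])
  also have "\<dots> \<le> card {y \<in> X. g y < m} + card (\<Union>j<C. B j)" by (rule card_Un_le)
  finally show False using low high big by simp
qed

definition parts_hypergraph :: "nat \<Rightarrow> nat \<Rightarrow> (nat \<Rightarrow> 'a set) \<Rightarrow> 'a set \<times> 'a set set" where
  "parts_hypergraph k \<chi> A = ((\<Union>i\<in>{1..\<chi>}. A i),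
     {e. e \<subseteq> (\<Union>i\<in>{1..\<chi>}. A i) \<and> card e = k \<and> (\<exists>i\<in>{1..\<chi>}. card (e \<inter> A i) = k - 1)})"

locale hypergraph_parts =
  fixes k \<chi> :: nat and A :: "nat \<Rightarrow> 'a set"
  assumes two_le_k: "2 \<le> k"
    and finite_A: "\<And>i. i \<in> {1..\<chi>} \<Longrightarrow> finite (A i)"
    and disjoint_A: "disjoint_family_on A {1..\<chi>}"
begin

lemma uniform_parts_hypergraph: "uniform_hypergraph k (parts_hypergraph k \<chi> A)"
  using finite_A by (auto simp: uniform_hypergraph_def parts_hypergraph_def)

lemma insert_mem_parts_hypergraph:
  assumes i: "i \<in> {1..\<chi>}" "i' \<in> {1..\<chi>}" "i \<noteq> i'"
    and S: "S \<subseteq> A i" "card S = k - 1" and y: "y \<in> A i'"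
  shows "insert y S \<in> snd (parts_hypergraph k \<chi> A)"
proof -
  have "y \<notin> A i" using y disjoint_family_onD[OF disjoint_A i] by blast
  then have "insert y S \<inter> A i = S" using S(1) by blast
  moreover have "finite S" using S(1) finite_A[OF i(1)] by (rule finite_subset)
  moreover have "y \<notin> S" using S(1) \<open>y \<notin> A i\<close> by blast
  ultimately have "card (insert y S) = k" "card (insert y S \<inter> A i) = k - 1"
    using S(2) two_le_k by simp_all
  moreover have "insert y S \<subseteq> (\<Union>i\<in>{1..\<chi>}. A i)" using S(1) y i by blast
  ultimately show ?thesis using i(1) unfolding parts_hypergraph_def by auto
qed

(* Part i owns block j if k-1 of its vertices map into it; no other part can then meet the
   block, as that would give a red edge of H. By pigeonhole every part before \<chi> owns a
   block, so ownership is a bijection onto the blocks. *)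
lemma blue_copy_layout:
  assumes one_le_\<chi>: "1 \<le> \<chi>"
    and big: "\<And>i. i \<in> {1..\<chi> - 1} \<Longrightarrow> (\<chi> - 1) * (k - 2) + m < card (A i)"
    and g: "inj_on g (fst (parts_hypergraph k \<chi> A))"
      "g ` fst (parts_hypergraph k \<chi> A) \<subseteq> {..< m + (\<chi> - 1) * s}"
    and blue: "\<And>e. e \<in> snd (parts_hypergraph k \<chi> A) \<Longrightarrow> \<not> c (g ` e)"
    and red: "\<And>j e. j < \<chi> - 1 \<Longrightarrow> e \<subseteq> block m s j \<Longrightarrow> c e"
  shows "g ` A \<chi> \<subseteq> {..<m}" "\<forall>j<\<chi> - 1. \<exists>i\<in>{1..\<chi> - 1}. \<exists>y\<in>A i. g y \<in> block m s j"
proof -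
  define C where "C = \<chi> - 1"
  define owns where "owns i j \<longleftrightarrow> (\<exists>S\<subseteq>A i. card S = k - 1 \<and> g ` S \<subseteq> block m s j)" for i j
  have A_sub: "A i \<subseteq> fst (parts_hypergraph k \<chi> A)" if "i \<in> {1..\<chi>}" for i
    using that unfolding parts_hypergraph_def fst_conv by blast
  have C_sub: "i \<in> {1..\<chi>} \<and> i \<noteq> \<chi>" if "i \<in> {1..C}" for i
    using that one_le_\<chi> unfolding C_def by auto
  have \<chi>: "\<chi> \<in> {1..\<chi>}" using one_le_\<chi> by simp
  have exclusive: "g y \<notin> block m s j"
    if own: "owns i j" and j: "j < C" and parts: "i \<in> {1..\<chi>}" "i' \<in> {1..\<chi>}" "i \<noteq> i'"
      and y: "y \<in> A i'" for i i' j y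
  proof
    assume y_in: "g y \<in> block m s j"
    obtain S where S: "S \<subseteq> A i" "card S = k - 1" "g ` S \<subseteq> block m s j"
      using own unfolding owns_def by blast
    have "insert y S \<in> snd (parts_hypergraph k \<chi> A)"
      using insert_mem_parts_hypergraph[OF parts S(1,2) y] .
    moreover have "g ` insert y S \<subseteq> block m s j" using S(3) y_in by simp
    then have "c (g ` insert y S)" using red j unfolding C_def by blast
    ultimately show False using blue by blast
  qed
  have owner_hits: "\<exists>y\<in>A i. g y \<in> block m s j" if own: "owns i j" for i j
  proof -
    obtain S where S: "S \<subseteq> A i" "card S = k - 1" "g ` S \<subseteq> block m s j"
      using own unfolding owns_def by blast
    moreover have "card S \<noteq> 0" using S(2) two_le_k by simp
    ultimately have "S \<noteq> {}" by (metis card.empty)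
    then show ?thesis using S by blast
  qed
  have "\<exists>j<C. owns i j" if i: "i \<in> {1..C}" for i
  proof -
    have i': "i \<in> {1..\<chi>}" using C_sub[OF i] by blast
    have "\<exists>j<C. \<exists>S\<subseteq>A i. card S = Suc (k - 2) \<and> g ` S \<subseteq> block m s j"
    proof (rule pigeonhole_block)
      show "finite (A i)" using finite_A[OF i'] .
      show "inj_on g (A i)" using g(1) A_sub[OF i'] by (rule inj_on_subset)
      show "g ` A i \<subseteq> {..< m + C * s}" using g(2) A_sub[OF i'] by (auto simp: C_def)
      show "m + C * (k - 2) < card (A i)" using big i by (simp add: C_def add.commute)
    qed
    moreover have "Suc (k - 2) = k - 1" using two_le_k by simp
    ultimately show ?thesis by (simp add: owns_def)
  qed
  then obtain J where J: "\<And>i. i \<in> {1..C} \<Longrightarrow> J i < C \<and> owns i (J i)" by metis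
  have "inj_on J {1..C}"
  proof (rule inj_onI)
    fix a b assume ab: "a \<in> {1..C}" "b \<in> {1..C}" "J a = J b"
    show "a = b"
    proof (rule ccontr)
      assume "a \<noteq> b"
      obtain y where "y \<in> A b" "g y \<in> block m s (J a)" using owner_hits J[OF ab(2)] ab(3) by auto
      then show False
        using exclusive[of a "J a" b y] J[OF ab(1)] C_sub[OF ab(1)] C_sub[OF ab(2)] \<open>a \<noteq> b\<close>
        by blast
    qed
  qed
  then have "card (J ` {1..C}) = card {..<C}" by (simp add: card_image)
  then have J_onto: "J ` {1..C} = {..<C}" using J by (intro card_subset_eq) auto
  show "g ` A \<chi> \<subseteq> {..<m}"
  proof
    fix z assume "z \<in> g ` A \<chi>"
    then obtain y where y: "y \<in> A \<chi>" "z = g y" by blast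
    have "y \<in> fst (parts_hypergraph k \<chi> A)" using A_sub[OF \<chi>] y(1) by blast
    then have "g y < m + C * s" using g(2) unfolding C_def by blast
    moreover have "g y \<notin> block m s j" if j: "j < C" for j
    proof -
      obtain i where "i \<in> {1..C}" "j = J i" using J_onto j by blast
      then show ?thesis using exclusive[of i j \<chi> y] J C_sub \<chi> y(1) j by blast
    qed
    ultimately show "z \<in> {..<m}" using lessThan_or_block y(2) by blast
  qed
  show "\<forall>j<\<chi> - 1. \<exists>i\<in>{1..\<chi> - 1}. \<exists>y\<in>A i. g y \<in> block m s j"
  proof (intro allI impI)
    fix j assume "j < \<chi> - 1"
    then have "j \<in> J ` {1..C}" using J_onto by (simp add: C_def)
    then obtain i where "i \<in> {1..C}" "j = J i" by blast
    then show "\<exists>i\<in>{1..\<chi> - 1}. \<exists>y\<in>A i. g y \<in> block m s j"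
      using owner_hits J unfolding C_def by blast
  qed
qed

lemma no_blue_copy:
  assumes one_le_\<chi>: "1 \<le> \<chi>"
    and big: "\<And>i. i \<in> {1..\<chi> - 1} \<Longrightarrow> (\<chi> - 1) * (k - 2) + m < card (A i)"
    and red: "\<And>j e. j < \<chi> - 1 \<Longrightarrow> e \<subseteq> block m s j \<Longrightarrow> c e"
    and card_A: "card (A \<chi>) = t"
    and rich: "\<And>X. X \<subseteq> {..<m} \<Longrightarrow> card X = t \<Longrightarrow>
      \<exists>T\<subseteq>X. card T = k - 1 \<and> (\<exists>j<\<chi> - 1. \<forall>v\<in>block m s j. c (insert v T))"
  shows "\<not> copy_in k (m + (\<chi> - 1) * s) c False (parts_hypergraph k \<chi> A)"
proof
  let ?H = "parts_hypergraph k \<chi> A"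
  assume "copy_in k (m + (\<chi> - 1) * s) c False ?H"
  then obtain g where g: "inj_on g (fst ?H)" "g ` fst ?H \<subseteq> {..< m + (\<chi> - 1) * s}"
    and g_edges: "\<forall>e\<in>snd ?H. card (g ` e) = k \<and> c (g ` e) = False"
    unfolding copy_in_def by blast
  have blue: "\<not> c (g ` e)" if "e \<in> snd ?H" for e using g_edges that by blast
  have A_\<chi>: "g ` A \<chi> \<subseteq> {..<m}"
    using one_le_\<chi> big g blue red by (rule blue_copy_layout(1))
  have hit: "\<forall>j<\<chi> - 1. \<exists>i\<in>{1..\<chi> - 1}. \<exists>y\<in>A i. g y \<in> block m s j"
    using one_le_\<chi> big g blue red by (rule blue_copy_layout(2))
  have \<chi>: "\<chi> \<in> {1..\<chi>}" using one_le_\<chi> by simp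
  have "A \<chi> \<subseteq> fst ?H" using \<chi> unfolding parts_hypergraph_def fst_conv by blast
  then have inj: "inj_on g (A \<chi>)" using g(1) by (rule inj_on_subset[rotated])
  then have card_gA: "card (g ` A \<chi>) = t" using card_A by (simp add: card_image)
  obtain T where T: "T \<subseteq> g ` A \<chi>" "card T = k - 1"
    and "\<exists>j<\<chi> - 1. \<forall>v\<in>block m s j. c (insert v T)"
    using rich[OF A_\<chi> card_gA] by blast
  then obtain j where j: "j < \<chi> - 1" and red_T: "\<forall>v\<in>block m s j. c (insert v T)"
    by blast
  define S where "S = A \<chi> \<inter> g -` T"
  have S: "S \<subseteq> A \<chi>" "g ` S = T" using T(1) unfolding S_def by blast+
  then have "card S = k - 1" using T(2) card_image[OF inj_on_subset[OF inj S(1)]] by simp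
  obtain i y where i: "i \<in> {1..\<chi> - 1}" and y: "y \<in> A i" "g y \<in> block m s j"
    using hit j by blast
  have "i \<in> {1..\<chi>}" "\<chi> \<noteq> i" using i by auto
  then have "insert y S \<in> snd ?H"
    by (intro insert_mem_parts_hypergraph[OF \<chi> _ _ S(1) \<open>card S = k - 1\<close> y(1)])
  moreover have "c (g ` insert y S)" using red_T y(2) S(2) by simp
  ultimately show False using blue by blast
qed

lemma no_arrow_tau_colouring:
  assumes k: "3 \<le> k" and t: "k - 1 \<le> t" and \<chi>: "2 \<le> \<chi>"
    and L: "3 \<le> L" and n: "n = L * (k - 1)"
    and big: "\<And>i. i \<in> {1..\<chi> - 1} \<Longrightarrow> (\<chi> - 1) * (k - 2) + tau (k - 1) t < card (A i)"
    and card_A: "card (A \<chi>) = t"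
  shows "\<not> ramsey_arrows k (tau (k - 1) t + (\<chi> - 1) * (n - 1)) (loose_cycle k n) (parts_hypergraph k \<chi> A)"
proof -
  define m where "m = tau (k - 1) t"
  have "1 \<le> k - 1" "1 \<le> t" using k t by simp_all
  then obtain F where "tau_admissible (k - 1) t m F"
    unfolding m_def using tau_admissible_tau by blast
  then have F_edges: "\<And>T. T \<in> F \<Longrightarrow> T \<subseteq> {..<m} \<and> card T = k - 1"
    and F_alpha: "independence_number {..<m} F < t"
    and F_linear: "\<And>T T'. T \<in> F \<Longrightarrow> T' \<in> F \<Longrightarrow> T \<noteq> T' \<Longrightarrow> card (T \<inter> T') \<noteq> 1"
    unfolding tau_admissible_def by blast+
  define c where "c e \<longleftrightarrow> (\<exists>j<\<chi> - 1. e \<subseteq> block m (n - 1) j) \<or>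
      (\<exists>T\<in>F. \<exists>v. v \<notin> {..<m} \<and> e = insert v T)" for e
  have no_red: "\<not> copy_in k (m + (\<chi> - 1) * (n - 1)) c True (loose_cycle k n)"
  proof
    assume copy: "copy_in k (m + (\<chi> - 1) * (n - 1)) c True (loose_cycle k n)"
    have k2: "2 \<le> k" using k by simp
    obtain E x where chain: "cycle_chain L E x" and red: "\<And>i. c (E i)"
      and card_E: "card (\<Union>i. E i) = n"
      by (rule red_loose_cycle_chain[OF copy k2 L n]) (rule that)
    interpret cycle_chain L E x by (rule chain)
    have red': "(\<exists>j. E i \<subseteq> block m (n - 1) j) \<or>
        (\<exists>T\<in>F. \<exists>v. v \<notin> {..<m} \<and> E i = insert v T)" for i
      using red[of i] unfolding c_def by blast
    have F': "T \<subseteq> {..<m} \<and> 2 \<le> card T" if "T \<in> F" for T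
      using F_edges[OF that] k by simp
    have "\<exists>j. E i \<subseteq> block m (n - 1) j" for i
      by (rule in_parts_if_linear[where F = F and W = "{..<m}"]) (fact red' block_Int_lessThan F' F_linear)+
    moreover have "finite (block m (n - 1) j) \<and> card (block m (n - 1) j) < card (\<Union>i. E i)" for j
      using card_E n k L by (simp add: finite_block card_block)
    ultimately show False using not_in_small_parts disjoint_family_block by blast
  qed
  have no_blue: "\<not> copy_in k (m + (\<chi> - 1) * (n - 1)) c False (parts_hypergraph k \<chi> A)"
  proof (rule no_blue_copy[where t = t])
    show "1 \<le> \<chi>" using \<chi> by simp
    show "(\<chi> - 1) * (k - 2) + m < card (A i)" if "i \<in> {1..\<chi> - 1}" for i
      using big[OF that] by (simp add: m_def)
    show "c e" if "j < \<chi> - 1" "e \<subseteq> block m (n - 1) j" for j e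
      using that unfolding c_def by blast
    show "card (A \<chi>) = t" by (rule card_A)
    fix X assume X: "X \<subseteq> {..<m}" "card X = t"
    then have "\<exists>T\<in>F. T \<subseteq> X"
      using edge_subset_if_independence_number_less[of "{..<m}" X F] F_alpha by simp
    then obtain T where T: "T \<in> F" "T \<subseteq> X" by blast
    have "\<forall>v\<in>block m (n - 1) 0. c (insert v T)"
    proof
      fix v assume "v \<in> block m (n - 1) 0"
      then have "v \<notin> {..<m}" using block_Int_lessThan by blast
      then show "c (insert v T)" using T(1) unfolding c_def by blast
    qed
    moreover have "0 < \<chi> - 1" using \<chi> by simp
    ultimately show "\<exists>T\<subseteq>X. card T = k - 1 \<and> (\<exists>j<\<chi> - 1. \<forall>v\<in>block m (n - 1) j. c (insert v T))"
      using T F_edges[OF T(1)] by blast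
  qed
  have "\<not> ramsey_arrows k (m + (\<chi> - 1) * (n - 1)) (loose_cycle k n) (parts_hypergraph k \<chi> A)"
    unfolding ramsey_arrows_def using no_red no_blue by blast
  then show ?thesis by (simp add: m_def)
qed

lemma no_arrow_subset_colouring:
  assumes k: "3 \<le> k" and t: "k - 1 \<le> t" and q: "k - 1 \<le> q" and \<chi>q: "q choose (k - 1) < \<chi>"
    and L: "3 \<le> L" and n: "n = L * (k - 1)" and long: "q + L < n"
    and big: "\<And>i. i \<in> {1..\<chi> - 1} \<Longrightarrow> (\<chi> - 1) * (k - 2) + q < card (A i)"
    and card_A: "card (A \<chi>) = t"
  shows "\<not> ramsey_arrows k (q + (\<chi> - 1) * (n - 1)) (loose_cycle k n) (parts_hypergraph k \<chi> A)"
proof -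
  define B where "B = {T. T \<subseteq> {..<q} \<and> card T = k - 1}"
  have "finite B" unfolding B_def by simp
  moreover have "B \<noteq> {}"
    using obtain_subset_with_card_n[of "k - 1" "{..<q}"] q unfolding B_def by auto
  moreover have "card B \<le> \<chi> - 1" using \<chi>q unfolding B_def by (simp add: n_subsets)
  ultimately obtain \<sigma> where \<sigma>_B: "\<And>j. \<sigma> j \<in> B" and B_\<sigma>: "B \<subseteq> \<sigma> ` {..<\<chi> - 1}"
    by (rule obtain_onto_lessThan) (rule that)
  define c where "c e \<longleftrightarrow> (\<exists>j<\<chi> - 1. e \<subseteq> block q (n - 1) j) \<or>
      (\<exists>j<\<chi> - 1. \<exists>v\<in>block q (n - 1) j. e = insert v (\<sigma> j))" for e
  have no_red: "\<not> copy_in k (q + (\<chi> - 1) * (n - 1)) c True (loose_cycle k n)"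
  proof
    assume copy: "copy_in k (q + (\<chi> - 1) * (n - 1)) c True (loose_cycle k n)"
    have k2: "2 \<le> k" using k by simp
    obtain E x where chain: "cycle_chain L E x" and red: "\<And>i. c (E i)"
      and card_E: "card (\<Union>i. E i) = n"
      by (rule red_loose_cycle_chain[OF copy k2 L n]) (rule that)
    interpret cycle_chain L E x by (rule chain)
    have red': "(\<exists>j. E i \<subseteq> block q (n - 1) j) \<or> (\<exists>j. \<exists>v\<in>block q (n - 1) j. E i = insert v (\<sigma> j))"
      for i using red[of i] unfolding c_def by blast
    have \<sigma>_W: "\<sigma> j \<subseteq> {..<q}" and card_\<sigma>: "2 \<le> card (\<sigma> j)" for j
      using \<sigma>_B[of j] k unfolding B_def by auto
    have "card (\<Union>i. E i) \<le> card {..<q} + L \<or> (\<forall>i. \<exists>j. E i \<subseteq> block q (n - 1) j)"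
      by (rule in_parts_or_card_le[where \<sigma> = \<sigma>])
        (fact red' disjoint_family_block block_Int_lessThan \<sigma>_W card_\<sigma> finite_lessThan)+
    then have "\<forall>i. \<exists>j. E i \<subseteq> block q (n - 1) j" using card_E long by simp
    moreover have "finite (block q (n - 1) j) \<and> card (block q (n - 1) j) < card (\<Union>i. E i)" for j
      using card_E n k L by (simp add: finite_block card_block)
    ultimately show False using not_in_small_parts disjoint_family_block by blast
  qed
  have no_blue: "\<not> copy_in k (q + (\<chi> - 1) * (n - 1)) c False (parts_hypergraph k \<chi> A)"
  proof (rule no_blue_copy[where t = t])
    show "1 \<le> \<chi>" using \<chi>q by simp
    show "(\<chi> - 1) * (k - 2) + q < card (A i)" if "i \<in> {1..\<chi> - 1}" for i
      using big[OF that] .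
    show "c e" if "j < \<chi> - 1" "e \<subseteq> block q (n - 1) j" for j e
      using that unfolding c_def by blast
    show "card (A \<chi>) = t" by (rule card_A)
    fix X assume X: "X \<subseteq> {..<q}" "card X = t"
    then obtain T where T: "T \<subseteq> X" "card T = k - 1"
      using t by (meson obtain_subset_with_card_n)
    then have "T \<in> B" using X(1) unfolding B_def by blast
    then obtain j where j: "j < \<chi> - 1" "\<sigma> j = T" using B_\<sigma> by blast
    have "\<forall>v\<in>block q (n - 1) j. c (insert v T)" using j unfolding c_def by blast
    then show "\<exists>T\<subseteq>X. card T = k - 1 \<and> (\<exists>j<\<chi> - 1. \<forall>v\<in>block q (n - 1) j. c (insert v T))"
      using T j(1) by blast
  qed
  show ?thesis unfolding ramsey_arrows_def using no_red no_blue by blast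
qed

lemma no_arrow_block_colouring:
  assumes k: "3 \<le> k" and q: "k - 1 \<le> q" and \<chi>q: "q choose (k - 1) < \<chi>"
    and L: "3 \<le> L" and n: "n = L * (k - 1)" and short: "n \<le> q + L"
    and big: "\<And>i. i \<in> {1..\<chi> - 1} \<Longrightarrow> (\<chi> - 1) * (k - 2) + q < card (A i)"
  shows "\<not> ramsey_arrows k (q + (\<chi> - 1) * (n - 1)) (loose_cycle k n) (parts_hypergraph k \<chi> A)"
proof -
  define C where "C = \<chi> - 1"
  have "k - 1 = Suc (k - 2)" using k by simp
  then have n_split: "n = L * (k - 2) + L" using n by simp
  then have Lq: "L * (k - 2) \<le> q" using short by simp
  moreover have "k \<le> 3 * (k - 2)" using k by simp
  moreover have "3 * (k - 2) \<le> L * (k - 2)" using L by (rule mult_le_mono1)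
  ultimately have kq: "k \<le> q" by linarith
  then have "q \<le> q choose (k - 1)" using k by (intro upper_le_binomial) simp_all
  then have qC: "q \<le> C" using \<chi>q unfolding C_def by simp
  have "1 \<le> k - 2" using k by simp
  then have "L \<le> L * (k - 2)" "C \<le> C * (k - 2)"
    using mult_le_mono2[of 1 "k - 2"] by (metis mult.right_neutral)+
  then have LC: "L \<le> C * (k - 2)" using Lq qC by linarith
  have n_small: "n < card (A i)" if i: "i \<in> {1..C}" for i
  proof -
    have "C * (k - 2) + q < card (A i)" using big i unfolding C_def by blast
    then show ?thesis using n_split Lq LC by linarith
  qed
  define c where "c e \<longleftrightarrow> (\<exists>j<C. e \<subseteq> block q (n - 1) j)" for e
  have no_red: "\<not> copy_in k (q + C * (n - 1)) c True (loose_cycle k n)"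
  proof
    assume copy: "copy_in k (q + C * (n - 1)) c True (loose_cycle k n)"
    have k2: "2 \<le> k" using k by simp
    obtain E x where chain: "cycle_chain L E x" and red: "\<And>i. c (E i)"
      and card_E: "card (\<Union>i. E i) = n"
      by (rule red_loose_cycle_chain[OF copy k2 L n]) (rule that)
    have "\<exists>j. E i \<subseteq> block q (n - 1) j" for i using red[of i] unfolding c_def by blast
    moreover have "finite (block q (n - 1) j) \<and> card (block q (n - 1) j) < card (\<Union>i. E i)" for j
      using card_E n k L by (simp add: finite_block card_block)
    ultimately show False
      using cycle_chain.not_in_small_parts[OF chain] disjoint_family_block by blast
  qed
  have no_blue: "\<not> copy_in k (q + C * (n - 1)) c False (parts_hypergraph k \<chi> A)"
  proof
    assume "copy_in k (q + C * (n - 1)) c False (parts_hypergraph k \<chi> A)"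
    then have upper: "card (fst (parts_hypergraph k \<chi> A)) \<le> q + C * (n - 1)"
      by (rule card_le_of_copy_in)
    have "C * (n + 1) = (\<Sum>i\<in>{1..C}. n + 1)" by simp
    also have "\<dots> \<le> (\<Sum>i\<in>{1..C}. card (A i))"
      using n_small by (intro sum_mono) (simp add: Suc_leI)
    also have "\<dots> = card (\<Union>i\<in>{1..C}. A i)"
    proof (rule card_UN_disjoint[symmetric])
      show "\<forall>i\<in>{1..C}. finite (A i)" using finite_A by (auto simp: C_def)
      have "disjoint_family_on A {1..C}"
        using disjoint_A by (rule disjoint_family_on_mono[rotated]) (auto simp: C_def)
      then show "\<forall>i\<in>{1..C}. \<forall>j\<in>{1..C}. i \<noteq> j \<longrightarrow> A i \<inter> A j = {}"
        unfolding disjoint_family_on_def .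
    qed simp
    also have "\<dots> \<le> card (fst (parts_hypergraph k \<chi> A))"
    proof (rule card_mono)
      show "finite (fst (parts_hypergraph k \<chi> A))"
        using uniform_parts_hypergraph by (simp add: uniform_hypergraph_def)
      have "(\<Union>i\<in>{1..C}. A i) \<subseteq> (\<Union>i\<in>{1..\<chi>}. A i)" unfolding C_def by (rule UN_mono) auto
      then show "(\<Union>i\<in>{1..C}. A i) \<subseteq> fst (parts_hypergraph k \<chi> A)"
        by (simp add: parts_hypergraph_def)
    qed
    finally have "C * (n + 1) \<le> q + C * (n - 1)" using upper by linarith
    moreover have "C * (n + 1) = C * (n - 1) + 2 * C"
    proof -
      have "0 < n" using n_split L by simp
      then obtain n' where "n = Suc n'" using gr0_implies_Suc by blast
      then show ?thesis by (simp add: algebra_simps)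
    qed
    ultimately show False using qC kq k by linarith
  qed
  show ?thesis using no_red no_blue unfolding ramsey_arrows_def C_def by blast
qed

lemma not_ramsey_arrows:
  assumes k: "3 \<le> k" and t: "k - 1 \<le> t" and q: "k - 1 \<le> q" and \<chi>q: "q choose (k - 1) < \<chi>"
    and L: "3 \<le> L" and n: "n = L * (k - 1)"
    and big: "\<And>i. i \<in> {1..\<chi> - 1} \<Longrightarrow> (\<chi> - 1) * (k - 2) + max (tau (k - 1) t) q < card (A i)"
    and card_A: "card (A \<chi>) = t"
  shows "\<not> ramsey_arrows k (max (tau (k - 1) t) q + (\<chi> - 1) * (n - 1)) (loose_cycle k n)
    (parts_hypergraph k \<chi> A)"
proof (cases "q \<le> tau (k - 1) t")
  case True
  have "0 < q choose (k - 1)" using q by simp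
  then have "2 \<le> \<chi>" using \<chi>q by linarith
  then show ?thesis using no_arrow_tau_colouring[OF k t _ L n _ card_A] big True by simp
next
  case False
  then have m: "max (tau (k - 1) t) q = q" by simp
  show ?thesis
  proof (cases "q + L < n")
    case True
    then show ?thesis using no_arrow_subset_colouring[OF k t q \<chi>q L n True _ card_A] big m by simp
  next
    case False
    then show ?thesis using no_arrow_block_colouring[OF k q \<chi>q L n] big m by simp
  qed
qed

end

theorem proposition1p10:
  fixes k t q \<chi> n :: nat and A :: "nat \<Rightarrow> 'a set"
  assumes "k \<ge> 3" and "t \<ge> k - 1" and "q \<ge> k - 1"
    and "\<chi> > q choose (k - 1)"
    and "n \<ge> 3 * (k - 1)" and "n mod (k - 1) = 0"
    and "\<forall>i\<in>{1..\<chi>}. finite (A i)"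
    and "\<forall>i\<in>{1..\<chi>}. \<forall>j\<in>{1..\<chi>}. i \<noteq> j \<longrightarrow> A i \<inter> A j = {}"
    and "\<forall>i\<in>{1..\<chi> - 1}. card (A i) > (\<chi> - 1) * (k - 2) + max (tau (k - 1) t) q"
    and "card (A \<chi>) = t"
  shows "ramsey_number k (loose_cycle k n)
           (\<Union>i\<in>{1..\<chi>}. A i,
            {e. e \<subseteq> (\<Union>i\<in>{1..\<chi>}. A i) \<and> card e = k \<and> (\<exists>i\<in>{1..\<chi>}. card (e \<inter> A i) = k - 1)})
         > (\<chi> - 1) * (n - 1) + max (tau (k - 1) t) q"
proof -
  interpret hypergraph_parts k \<chi> A
    using assms(1,7,8) by unfold_locales (simp_all add: disjoint_family_on_def)
  define L where "L = n div (k - 1)"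
  have n: "n = L * (k - 1)" using assms(6) div_mult_mod_eq[of n "k - 1"] unfolding L_def by simp
  have "3 * (k - 1) \<le> L * (k - 1)" using assms(5) n by simp
  then have L: "3 \<le> L" using assms(1) by simp
  have "\<not> ramsey_arrows k (max (tau (k - 1) t) q + (\<chi> - 1) * (n - 1)) (loose_cycle k n)
      (parts_hypergraph k \<chi> A)"
    using assms(9) by (intro not_ramsey_arrows[OF assms(1-4) L n _ assms(10)]) blast
  then have "max (tau (k - 1) t) q + (\<chi> - 1) * (n - 1)
      < ramsey_number k (loose_cycle k n) (parts_hypergraph k \<chi> A)"
    using assms(1) L n by (intro less_ramsey_number uniform_loose_cycle uniform_parts_hypergraph) simp_all
  then show ?thesis unfolding parts_hypergraph_def by (simp add: add.commute)
qed

end
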